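(* Let $m \equiv 3 \pmod 4$ with $m > 3$, $n = 3^m - 1$, $v = (3^{(m+1)/2}+1)/2$ and $\delta = (3^{(m-1)/2}+7)/2$. Then $\gcd(v,n) = 1$, and, setting $T_{(2,3,m)}(v) = \{ vi \bmod n : i \in T_{(2,3,m)}\}$, we have $\{n-(\delta-1), \ldots, n-2, n-1\} \subseteq T_{(2,3,m)}(v)$.
   Context: For an integer $0 \le j \le n-1$ with $3$-adic expansion $j = \sum_{t=0}^{m-1} j_t 3^t$, $j_t \in \{0,1,2\}$, let $w_3(j) = \sum_{t=0}^{m-1} j_t$. For distinct $i_1,i_2 \in \{0,1,2,3\}$, $T_{(i_1,i_2,m)} = \{1 \le j \le n-1 : w_3(j) \equiv i_1 \text{ or } i_2 \pmod 4\}$. For an integer $b$, $b \bmod n$ is the unique $b_0 \in \{0,\ldots,n-1\}$ with $b \equiv b_0 \pmod n$. *)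

theory Defs
  imports Main
begin

fun w3 :: "nat \<Rightarrow> nat" where
  "w3 j = (if j = 0 then 0 else j mod 3 + w3 (j div 3))"

definition T_set :: "nat \<Rightarrow> nat \<Rightarrow> nat \<Rightarrow> nat set" where
  "T_set i1 i2 m = {j. 1 \<le> j \<and> j \<le> 3 ^ m - 2 \<and>
                       (w3 j mod 4 = i1 \<or> w3 j mod 4 = i2)}"

definition T_mult :: "nat \<Rightarrow> nat \<Rightarrow> nat \<Rightarrow> nat \<Rightarrow> nat set" where
  "T_mult i1 i2 m v = (\<lambda>i. (v * i) mod (3 ^ m - 1)) ` T_set i1 i2 m"

end

theory Submission
  imports Defs
begin

text \<open>
  Write \<open>m = 2k + 1\<close> with \<open>k\<close> odd and \<open>X = 3^k = 4r + 3\<close>, so that \<open>n = 3X\<^sup>2 - 1\<close> and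
  \<open>v = (3X + 1)/2 = 6r + 5\<close>. For every offset \<open>1 \<le> t \<le> \<delta> - 1 = 2r + 4\<close> we give an explicit
  \<open>i < n\<close> with \<open>v i + t \<equiv> 0 (mod n)\<close>, i.e. \<open>v i mod n = n - t\<close>. Each \<open>i\<close> is built by
  concatenating base-3 blocks \<open>x\<close>, \<open>y\<close> of \<open>k\<close> digits with \<open>x + y = 3^k - 1\<close>, possibly
  separated by one extra digit: digitwise \<open>x\<close> and \<open>y\<close> sum to \<open>2\<close>, so \<open>w\<^sub>3(i)\<close> is \<open>2k\<close> or
  \<open>2k + 1\<close>, which is \<open>2\<close> or \<open>3\<close> modulo \<open>4\<close> because \<open>k\<close> is odd.
  Finally \<open>2v(3X - 1) = 3n + 2\<close> with \<open>v\<close> odd gives \<open>gcd v n = 1\<close>.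
\<close>

declare w3.simps [simp del]

lemma w3_unfold: "w3 x = x mod 3 + w3 (x div 3)"
  by (cases "x = 0") (simp_all add: w3.simps)

lemma w3_0 [simp]: "w3 0 = 0"
  by (simp add: w3.simps)

lemma w3_1 [simp]: "w3 1 = 1" "w3 (Suc 0) = Suc 0"
  by (simp_all add: w3.simps)

lemma w3_2 [simp]: "w3 2 = 2"
  by (subst w3_unfold) simp

lemma w3_mult_power_add:
  assumes "b < 3 ^ j"
  shows "w3 (a * 3 ^ j + b) = w3 a + w3 b"
  using assms
proof (induction j arbitrary: b)
  case 0
  then show ?case by simp
next
  case (Suc j)
  have digits: "a * 3 ^ Suc j + b = b mod 3 + 3 * (a * 3 ^ j + b div 3)"
    by simp
  have "b div 3 < 3 ^ j"
    using Suc.prems by (simp add: less_mult_imp_div_less)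
  then have "w3 (a * 3 ^ j + b div 3) = w3 a + w3 (b div 3)"
    by (rule Suc.IH)
  moreover have "w3 (a * 3 ^ Suc j + b) = b mod 3 + w3 (a * 3 ^ j + b div 3)"
    by (subst digits, subst w3_unfold) simp
  ultimately show ?case
    using w3_unfold[of b] by simp
qed

lemma w3_mult_power: "w3 (a * 3 ^ j) = w3 a"
  using w3_mult_power_add[of 0 j a] by simp

lemma w3_append_digit: "d < 3 \<Longrightarrow> w3 (a * 3 + d) = w3 a + d"
  using w3_mult_power_add[of d 1 a] w3_unfold[of d] by simp

lemma w3_add_complement:
  "x + y = 3 ^ k - 1 \<Longrightarrow> w3 x + w3 y = 2 * k"
proof (induction k arbitrary: x y)
  case 0
  then show ?case by simp
next
  case (Suc k)
  define K where "K = (3::nat) ^ k"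
  define a b c d where "a = x div 3" and "b = y div 3" and "c = x mod 3" and "d = y mod 3"
  have "3 * a + c + (3 * b + d) = 3 * K - 1" "c < 3" "d < 3" "1 \<le> K"
    using Suc.prems unfolding a_def b_def c_def d_def K_def by simp_all
  then have "c + d = 2 \<and> a + b = K - 1"
    by presburger
  then have "x mod 3 + y mod 3 = 2" "w3 (x div 3) + w3 (y div 3) = 2 * k"
    unfolding a_def b_def c_def d_def K_def by (simp_all add: Suc.IH)
  then show ?case
    by (subst (1 2) w3_unfold) simp
qed

lemma three_power_mod_four: "(3::nat) ^ k mod 4 = (if odd k then 3 else 1)"
proof (induction k)
  case 0
  then show ?case by simp
next
  case (Suc k)
  have "(3::nat) ^ Suc k mod 4 = 3 * (3 ^ k mod 4) mod 4"
    by (simp add: mod_mult_right_eq)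
  with Suc.IH show ?case by simp
qed

lemma diff_mem_T_mult:
  fixes v i t c m :: nat
  assumes mult: "v * i + t = c * (3 ^ m - 1)"
    and t: "0 < t" "t \<le> 3 ^ m - 1" and "c \<le> v" "0 < i"
    and "w3 i mod 4 = i1 \<or> w3 i mod 4 = i2"
  shows "3 ^ m - 1 - t \<in> T_mult i1 i2 m v"
proof -
  define N where "N = (3::nat) ^ m - 1"
  have "v * i < c * N"
    using mult t unfolding N_def by linarith
  also have "\<dots> \<le> v * N"
    using \<open>c \<le> v\<close> by simp
  finally have "i < N" by simp
  have tN: "0 < t" "t \<le> N"
    using t unfolding N_def by simp_all
  obtain d where "c = Suc d"
    using \<open>v * i < c * N\<close> by (cases c) auto
  with mult tN have "v * i = d * N + (N - t)"
    unfolding N_def by simp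
  then have "v * i mod N = (N - t) mod N"
    by (simp only: mod_mult_self3)
  also have "\<dots> = N - t"
    using tN by simp
  finally have "v * i mod N = N - t" .
  moreover have "i \<in> T_set i1 i2 m"
    using \<open>i < N\<close> \<open>0 < i\<close> assms(6) unfolding T_set_def N_def by auto
  ultimately show ?thesis
    unfolding T_mult_def N_def by (auto intro: image_eqI[where x = i])
qed

locale odd_power_of_three =
  fixes k r :: nat
  assumes power_k: "3 ^ k = 4 * r + 3"
    and r_pos: "0 < r"
begin

lemma odd_k: "odd k"
  using three_power_mod_four[of k] power_k by (auto split: if_splits)

lemma power_Suc_k: "3 ^ Suc k = 3 * (4 * r + 3)"
  using power_k by simp

lemma power_modulus: "3 ^ (2 * k + 1) = 3 * (4 * r + 3)\<^sup>2"
proof -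
  have "(3::nat) ^ (2 * k + 1) = 3 * (3 ^ k)\<^sup>2"
    by (simp flip: power_mult add: mult.commute)
  then show ?thesis
    unfolding power_k .
qed

lemma offset_le_modulus: "t \<le> 2 * r + 4 \<Longrightarrow> t \<le> 3 ^ (2 * k + 1) - 1"
proof -
  assume "t \<le> 2 * r + 4"
  moreover have "4 * r + 3 \<le> (4 * r + 3)\<^sup>2"
    by (simp add: power2_eq_square)
  ultimately show ?thesis
    unfolding power_modulus by linarith
qed

lemma coprime_multiplier: "gcd (6 * r + 5) (3 ^ (2 * k + 1) - 1) = 1"
proof -
  let ?v = "6 * r + 5" and ?n = "3 * (4 * r + 3)\<^sup>2 - 1"
  have "int (2 * ?v * (12 * r + 8)) = int (3 * ?n + 2)"
    by (simp add: power2_eq_square algebra_simps)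
  then have "2 * ?v * (12 * r + 8) = 3 * ?n + 2"
    by (simp only: of_nat_eq_iff)
  moreover have "gcd ?v ?n dvd 2 * ?v * (12 * r + 8)" "gcd ?v ?n dvd 3 * ?n"
    by (intro dvd_mult2 dvd_mult gcd_dvd1, intro dvd_mult gcd_dvd2)
  ultimately have "gcd ?v ?n dvd 2"
    by (metis dvd_add_right_iff)
  moreover have "coprime ?v 2"
    by simp
  ultimately have "coprime ?v ?n"
    by (metis coprime_common_divisor gcd_dvd1 is_unit_gcd)
  then show ?thesis
    unfolding power_modulus by (simp only: coprime_iff_gcd_eq_1)
qed

lemma even_offset_mem:
  assumes "1 \<le> s" "s \<le> r + 2"
  shows "3 ^ (2 * k + 1) - 1 - 2 * s \<in> T_mult 2 3 (2 * k + 1) (6 * r + 5)"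
proof -
  define i where "i = (3 ^ k - 2 * s) * 3 ^ Suc k + (2 * s - 1)"
  have "2 * s \<le> 4 * r + 3" "1 \<le> 2 * s" "3 * s \<le> 6 * r + 5" "1 \<le> 3 * (4 * r + 3)\<^sup>2"
    using assms r_pos by simp_all
  then have "int ((6 * r + 5) * ((4 * r + 3 - 2 * s) * (3 * (4 * r + 3)) + (2 * s - 1)) + 2 * s)
      = int ((6 * r + 5 - 3 * s) * (3 * (4 * r + 3)\<^sup>2 - 1))"
    by (simp only: of_nat_add of_nat_mult of_nat_power of_nat_numeral of_nat_1 of_nat_diff)
      (simp add: power2_eq_square algebra_simps)
  then have mult: "(6 * r + 5) * i + 2 * s = (6 * r + 5 - 3 * s) * (3 ^ (2 * k + 1) - 1)"
    unfolding i_def power_k power_Suc_k power_modulus of_nat_eq_iff .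
  have "2 * s - 1 < 3 ^ Suc k"
    using assms power_Suc_k by simp
  then have "w3 i = w3 (3 ^ k - 2 * s) + w3 (2 * s - 1)"
    unfolding i_def by (rule w3_mult_power_add)
  also have "\<dots> = 2 * k"
    using assms power_k r_pos by (intro w3_add_complement) simp
  finally have w: "w3 i mod 4 = 2"
    using odd_k by presburger
  have i_pos: "0 < i"
    using assms unfolding i_def by simp
  show ?thesis
    by (rule diff_mem_T_mult[OF mult]) (use assms offset_le_modulus[of "2 * s"] w i_pos in simp_all)
qed

lemma odd_offset_mem:
  assumes "s \<le> r"
  shows "3 ^ (2 * k + 1) - 1 - (2 * s + 1) \<in> T_mult 2 3 (2 * k + 1) (6 * r + 5)"
proof -
  define i where "i = ((2 * r - 2 * s) * 3 + 1) * 3 ^ k + (2 * r + 2 + 2 * s)"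
  have "2 * s \<le> 2 * r" "3 * s \<le> 3 * r + 1" "1 \<le> 3 * (4 * r + 3)\<^sup>2"
    using assms by simp_all
  then have "int ((6 * r + 5) * (((2 * r - 2 * s) * 3 + 1) * (4 * r + 3) + (2 * r + 2 + 2 * s))
        + (2 * s + 1))
      = int ((3 * r + 1 - 3 * s) * (3 * (4 * r + 3)\<^sup>2 - 1))"
    by (simp only: of_nat_add of_nat_mult of_nat_power of_nat_numeral of_nat_1 of_nat_diff)
      (simp add: power2_eq_square algebra_simps)
  then have mult: "(6 * r + 5) * i + (2 * s + 1) = (3 * r + 1 - 3 * s) * (3 ^ (2 * k + 1) - 1)"
    unfolding i_def power_k power_modulus of_nat_eq_iff by simp
  have "2 * r + 2 + 2 * s < 3 ^ k"
    using assms power_k by simp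
  then have "w3 i = w3 ((2 * r - 2 * s) * 3 + 1) + w3 (2 * r + 2 + 2 * s)"
    unfolding i_def by (rule w3_mult_power_add)
  also have "\<dots> = w3 (2 * r - 2 * s) + w3 (2 * r + 2 + 2 * s) + 1"
    using w3_append_digit[of 1 "2 * r - 2 * s"] by simp
  also have "\<dots> = 2 * k + 1"
    using assms power_k by (subst w3_add_complement) simp_all
  finally have w: "w3 i mod 4 = 3"
    using odd_k by presburger
  have i_pos: "0 < i"
    unfolding i_def by simp
  show ?thesis
    by (rule diff_mem_T_mult[OF mult]) (use assms offset_le_modulus[of "2 * s + 1"] w i_pos in simp_all)
qed

lemma last_offset_mem:
  "3 ^ (2 * k + 1) - 1 - (2 * r + 3) \<in> T_mult 2 3 (2 * k + 1) (6 * r + 5)"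
proof -
  define i where "i = ((4 * r + 1) * 3 + 2) * 3 ^ k"
  have "(6 * r + 5) * (((4 * r + 1) * 3 + 2) * (4 * r + 3)) + (2 * r + 3)
      = (6 * r + 3) * (3 * (4 * r + 3)\<^sup>2 - 1)"
    by (rule of_nat_eq_iff[where 'a = int, THEN iffD1])
      (simp add: power2_eq_square algebra_simps)
  then have mult: "(6 * r + 5) * i + (2 * r + 3) = (6 * r + 3) * (3 ^ (2 * k + 1) - 1)"
    unfolding i_def power_k power_modulus by simp
  have "w3 i = w3 ((4 * r + 1) * 3 + 2)"
    unfolding i_def by (rule w3_mult_power)
  also have "\<dots> = w3 (4 * r + 1) + w3 1 + 1"
    using w3_append_digit[of 2 "4 * r + 1"] by simp
  also have "\<dots> = 2 * k + 1"
    using power_k by (subst w3_add_complement) simp_all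
  finally have w: "w3 i mod 4 = 3"
    using odd_k by presburger
  have i_pos: "0 < i"
    unfolding i_def by simp
  show ?thesis
    by (rule diff_mem_T_mult[OF mult]) (use offset_le_modulus[of "2 * r + 3"] w i_pos in simp_all)
qed

lemma offset_mem:
  assumes "1 \<le> t" "t \<le> 2 * r + 4"
  shows "3 ^ (2 * k + 1) - 1 - t \<in> T_mult 2 3 (2 * k + 1) (6 * r + 5)"
proof (cases "even t")
  case True
  then obtain s where t: "t = 2 * s" ..
  show ?thesis
    unfolding t by (rule even_offset_mem) (use assms t in simp_all)
next
  case False
  then obtain s where t: "t = 2 * s + 1" ..
  show ?thesis
  proof (cases "s \<le> r")
    case True
    then show ?thesis
      unfolding t by (rule odd_offset_mem)
  next
    case False
    with assms t have "t = 2 * r + 3"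
      by presburger
    then show ?thesis
      using last_offset_mem by simp
  qed
qed

end

theorem lemma8:
  fixes m n v \<delta> :: nat
  assumes "m mod 4 = 3" and "m > 3"
    and "n = 3 ^ m - 1"
    and "v = (3 ^ ((m + 1) div 2) + 1) div 2"
    and "\<delta> = (3 ^ ((m - 1) div 2) + 7) div 2"
  shows "gcd v n = 1 \<and> {n - (\<delta> - 1) .. n - 1} \<subseteq> T_mult 2 3 m v"
proof -
  define k where "k = m div 2"
  define r where "r = (3::nat) ^ k div 4"
  have m: "m = 2 * k + 1" and "odd k" and "k \<ge> 3"
    using assms(1,2) unfolding k_def by presburger+
  then have "3 ^ k = 4 * r + 3"
    using three_power_mod_four[of k] unfolding r_def by presburger
  moreover have "(3::nat) ^ 3 \<le> 3 ^ k"
    using \<open>k \<ge> 3\<close> by (rule power_increasing) simp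
  ultimately interpret odd_power_of_three k r
    by unfold_locales simp_all
  have n: "n = 3 ^ (2 * k + 1) - 1" and v: "v = 6 * r + 5" and \<delta>: "\<delta> = 2 * r + 5"
    using assms(3-5) power_k unfolding m by simp_all
  have "x \<in> T_mult 2 3 m v" if "x \<in> {n - (\<delta> - 1) .. n - 1}" for x
    using that offset_mem[of "n - x"] offset_le_modulus[of "2 * r + 4"]
    unfolding m n v \<delta> by auto
  with coprime_multiplier show ?thesis
    unfolding m n v by auto
qed

end
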